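(* Let $a:=\sum_{i=1}^{\infty}10^{1-\frac12 i(i+1)}$ (an irrational number). There exist a countable graph $G$ and a weight function $w:E(G)\to\{a,\,2a,\,2a-1\}$ such that $G$ has no strongly $w$-maximal matching. (Hence the rationality hypothesis cannot be dropped from the statement that every graph with finitely-valued rational edge weights has a strongly $w$-maximal matching.)
   Context: For a set $F$ of edges, $w[F]:=\sum_{e\in F}w(e)$. A matching $M$ in $G$ is called strongly $w$-maximal if $w[N\setminus M]\le w[M\setminus N]$ for every matching $N$ in $G$ with $|M\setminus N|<\infty$ and $|N\setminus M|<\infty$. *)

theory Defs
  imports Complex_Main
begin

text \<open>The constant a = sum over i >= 1 of 10^(1 - i(i+1)/2); summation index shifted: i+1 for i :: nat.\<close>
definition a_const :: real where
  "a_const = (\<Sum>i. 10 / 10 ^ ((Suc i) * (Suc i + 1) div 2))"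

definition simple_graph :: "'v set set \<Rightarrow> bool" where
  "simple_graph E \<longleftrightarrow> (\<forall>e\<in>E. \<exists>u v. u \<noteq> v \<and> e = {u, v})"

definition matching :: "'v set set \<Rightarrow> 'v set set \<Rightarrow> bool" where
  "matching E M \<longleftrightarrow> M \<subseteq> E \<and> (\<forall>e\<in>M. \<forall>f\<in>M. e \<noteq> f \<longrightarrow> e \<inter> f = {})"

definition strongly_w_maximal :: "'v set set \<Rightarrow> ('v set \<Rightarrow> real) \<Rightarrow> 'v set set \<Rightarrow> bool" where
  "strongly_w_maximal E w M \<longleftrightarrow> matching E M \<and>
     (\<forall>N. matching E N \<and> finite (M - N) \<and> finite (N - M) \<longrightarrow>
          sum w (N - M) \<le> sum w (M - N))"

end

theory Submission
  imports Defs "HOL-Library.Nat_Bijection"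
begin

text \<open>
  Let a = a_const = sum over i >= 1 of 10^(1 - i(i+1)/2) and delta = a - 1, so 0 < delta < 1,
  and let rho Q be the fractional part of delta * Q.  Multiplying a by suitable powers of ten
  shows that rho Q takes arbitrarily small positive values (this is where the special decimal
  expansion of a, and hence its irrationality, enters).

  The graph consists of a hub vertex 0 and, for every Q with rho Q > 0, a path of 4Q + 2 edges
  leaving the hub.  Its weights (all in {a, 2a, 2a - 1}) follow a "staircase" built from
  delta and rho Q, designed so that
    (i)  among packings of the path that avoid the hub edge the odd edges are heaviest,
    (ii) among packings that use the hub edge the even edges are heaviest, and
    (iii) the even packing beats the odd one by exactly 2 - rho Q.
  (i) and (ii) are proved by exhibiting nonnegative vertex potentials covering every edge
  tightly (LP duality on a path).

  A matching M using no hub edge is improved by switching some path to its even packing;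
  a matching using the hub edge of path Q is improved by switching Q to its odd packing and a
  path Q' with 0 < rho Q' < rho Q to its even packing, gaining rho Q - rho Q' > 0.  Either way
  M is not strongly w-maximal.
\<close>

definition tri :: "nat \<Rightarrow> nat" where
  "tri k = k * (k + 1) div 2"

lemma tri_Suc: "tri (Suc k) = tri k + Suc k"
  unfolding tri_def by (induction k) auto

lemma tri_mono: "i \<le> j \<Longrightarrow> tri i \<le> tri j"
  by (induction j) (auto simp: tri_Suc le_Suc_eq)

lemma tri_gap: "tri n + n + 1 + i \<le> tri (n + i + 1)"
  by (induction i) (auto simp: tri_Suc)

definition a_term :: "nat \<Rightarrow> real" where
  "a_term i = 10 / 10 ^ tri (Suc i)"

lemma a_const_suminf: "a_const = suminf a_term"
  unfolding a_const_def a_term_def tri_def by simp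

lemma a_term_pos: "0 < a_term i"
  unfolding a_term_def by simp

lemma a_term_summable: "summable a_term"
proof (rule summable_comparison_test)
  have "a_term i \<le> (1/10) ^ i" for i
  proof -
    have "Suc i \<le> tri (Suc i)" using tri_gap[of 0 i] by (simp add: tri_def)
    then have "(10::real) ^ Suc i \<le> 10 ^ tri (Suc i)" by (intro power_increasing) auto
    then have "a_term i \<le> 10 / 10 ^ Suc i"
      unfolding a_term_def by (intro divide_left_mono) auto
    then show ?thesis by (simp add: power_divide)
  qed
  then show "\<exists>N. \<forall>n\<ge>N. norm (a_term n) \<le> (1/10) ^ n"
    using a_term_pos by (auto intro!: exI[of _ 0] simp: less_imp_le)
qed (simp add: summable_geometric)

lemma scaled_a_term:
  assumes "1 \<le> n"
  shows "real (10 ^ (tri n - 1)) * a_term i = 10 ^ tri n / 10 ^ tri (Suc i)"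
proof -
  have "1 \<le> tri n" using tri_mono[OF assms] by (simp add: tri_def)
  then have "real (10 ^ (tri n - 1)) * 10 = 10 ^ tri n"
    by (simp flip: power_Suc2)
  then show ?thesis unfolding a_term_def by (simp add: field_simps)
qed

lemma scaled_tail_bounds:
  assumes n: "1 \<le> n"
  defines "t \<equiv> (\<Sum>i. real (10 ^ (tri n - 1)) * a_term (i + n))"
  shows "0 < t" "t < (1/10) ^ n"
proof -
  define c :: real where "c = real (10 ^ (tri n - 1))"
  have summ: "summable (\<lambda>i. c * a_term (i + n))"
    by (intro summable_mult summable_ignore_initial_segment a_term_summable)
  show "0 < t" unfolding t_def c_def[symmetric]
    by (rule suminf_pos[OF summ]) (simp add: c_def a_term_pos)
  have term_le: "c * a_term (i + n) \<le> (1/10) ^ (n + 1) * (1/10) ^ i" for i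
  proof -
    have "c * a_term (i + n) = 10 ^ tri n / 10 ^ tri (n + i + 1)"
      unfolding c_def scaled_a_term[OF n] by (simp add: add.commute)
    also have "\<dots> \<le> 10 ^ tri n / 10 ^ (tri n + (n + 1 + i))"
      using tri_gap[of n i] by (intro divide_left_mono power_increasing) auto
    also have "\<dots> = (1/10) ^ (n + 1) * (1/10) ^ i"
      by (simp add: power_add power_divide field_simps)
    finally show ?thesis .
  qed
  have "t \<le> (\<Sum>i. (1/10) ^ (n + 1) * (1/10::real) ^ i)" unfolding t_def c_def[symmetric]
    by (rule suminf_le[OF term_le summ]) (intro summable_mult summable_geometric, simp)
  also have "\<dots> = (1/10) ^ (n + 1) * (10/9)"
  proof -
    have "(\<Sum>i. (1/10::real) ^ i) = 10/9" by (subst suminf_geometric) auto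
    then show ?thesis by (subst suminf_mult) (auto intro: summable_geometric)
  qed
  also have "\<dots> < (1/10) ^ n" by simp
  finally show "t < (1/10) ^ n" .
qed

lemma scaled_a_const:
  assumes "1 \<le> n"
  shows "\<exists>t. real (10 ^ (tri n - 1)) * a_const = real (\<Sum>i<n. 10 ^ (tri n - tri (Suc i))) + t
              \<and> 0 < t \<and> t < (1/10) ^ n"
proof -
  define c :: real where "c = real (10 ^ (tri n - 1))"
  have summ: "summable (\<lambda>i. c * a_term i)" by (intro summable_mult a_term_summable)
  have "c * a_const = (\<Sum>i. c * a_term (i + n)) + (\<Sum>i<n. c * a_term i)"
    unfolding a_const_suminf suminf_mult[OF a_term_summable, symmetric]
    by (rule suminf_split_initial_segment[OF summ])
  moreover have "c * a_term i = 10 ^ (tri n - tri (Suc i))" if "i < n" for i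
  proof -
    have "tri (Suc i) \<le> tri n" using that by (intro tri_mono) simp
    then show ?thesis unfolding c_def scaled_a_term[OF assms] by (simp add: power_diff)
  qed
  ultimately have "c * a_const = real (\<Sum>i<n. 10 ^ (tri n - tri (Suc i))) + (\<Sum>i. c * a_term (i + n))"
    by simp
  then show ?thesis using scaled_tail_bounds[OF assms] unfolding c_def by blast
qed

definition delta :: real where
  "delta = a_const - 1"

lemma delta_bounds: "0 < delta" "delta < 1"
proof -
  obtain t where "real (10 ^ (tri 1 - 1)) * a_const = real (\<Sum>i<1. 10 ^ (tri 1 - tri (Suc i))) + t"
    and "0 < t" "t < (1/10) ^ 1"
    using scaled_a_const[of 1] by auto
  then show "0 < delta" "delta < 1" unfolding delta_def by (auto simp: tri_def)
qed

definition rho :: "nat \<Rightarrow> real" where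
  "rho Q = frac (delta * real Q)"

lemma rho_lt_1: "rho Q < 1"
  unfolding rho_def by (rule frac_lt_1)

(* the multiples of delta come arbitrarily close to integers from above; the witnesses are the
   powers of ten that shift a digit block of a_const in front of the decimal point *)
lemma rho_arbitrarily_small:
  assumes "0 < e"
  shows "\<exists>Q. 0 < rho Q \<and> rho Q < e"
proof -
  obtain n0 where "(1/10::real) ^ n0 < e" using real_arch_pow_inv[OF assms, of "1/10"] by auto
  moreover define n where "n = max n0 1"
  moreover have "(1/10::real) ^ n \<le> (1/10) ^ n0" unfolding n_def by (intro power_decreasing) auto
  ultimately have n: "(1/10::real) ^ n < e" "1 \<le> n" by linarith+
  define Q :: nat where "Q = 10 ^ (tri n - 1)"
  define N :: nat where "N = (\<Sum>i<n. 10 ^ (tri n - tri (Suc i)))"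
  obtain t where t: "real Q * a_const = real N + t" "0 < t" "t < (1/10) ^ n"
    using scaled_a_const[OF n(2)] unfolding Q_def N_def by blast
  have "(1/10::real) ^ n \<le> 1" by (intro power_le_one) auto
  then have "t < 1" using t by linarith
  moreover have "delta * real Q = t + of_int (int N - int Q)"
    using t(1) unfolding delta_def by (simp add: algebra_simps)
  ultimately have "rho Q = t" unfolding rho_def using t(2) by (simp add: frac_unique_iff)
  then show ?thesis using t n by auto
qed

text \<open>The staircase attached to a parameter Q: starting at 0, it alternately steps down by
  delta and up by 0 or 1, stays in the window (- rho Q - delta, 1 - rho Q] and reaches
  1 - rho Q after 2 Q steps.\<close>

definition stair_height :: "nat \<Rightarrow> nat \<Rightarrow> int" where
  "stair_height Q k = \<lfloor>delta * real k + 1 - rho Q\<rfloor>"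

definition stair :: "nat \<Rightarrow> nat \<Rightarrow> real" where
  "stair Q j = of_int (stair_height Q (j div 2)) - delta * real ((j + 1) div 2)"

lemma stair_bounds: "- rho Q - delta < stair Q j" "stair Q j \<le> 1 - rho Q"
proof -
  define k where "k = j div 2"
  have fl: "of_int (stair_height Q k) \<le> delta * real k + 1 - rho Q"
    "delta * real k + 1 - rho Q < of_int (stair_height Q k) + 1"
    unfolding stair_height_def by linarith+
  consider "(j + 1) div 2 = k" | "(j + 1) div 2 = k + 1" unfolding k_def by (cases "even j") (auto elim!: evenE oddE)
  then show "- rho Q - delta < stair Q j" "stair Q j \<le> 1 - rho Q"
    using fl delta_bounds unfolding stair_def k_def[symmetric] by (cases; simp add: algebra_simps)+
qed

lemma stair_down_step: "stair Q (2 * k + 1) - stair Q (2 * k) = - delta"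
  unfolding stair_def by (simp add: algebra_simps)

lemma stair_up_step: "stair Q (2 * k + 2) - stair Q (2 * k + 1) \<in> {0, 1}"
proof -
  define x where "x = delta * real k + 1 - rho Q"
  have "stair_height Q (k + 1) = \<lfloor>x + delta\<rfloor>" "stair_height Q k = \<lfloor>x\<rfloor>"
    unfolding stair_height_def x_def by (simp_all add: algebra_simps)
  moreover have "\<lfloor>x\<rfloor> \<le> \<lfloor>x + delta\<rfloor>" "\<lfloor>x + delta\<rfloor> \<le> \<lfloor>x\<rfloor> + 1"
    using delta_bounds by (auto intro: floor_mono) linarith
  moreover have "(2 * k + 2) div 2 = k + 1" "(2 * k + 1) div 2 = k"
    "(2 * k + 2 + 1) div 2 = k + 1" "(2 * k + 1 + 1) div 2 = k + 1" by auto
  ultimately show ?thesis unfolding stair_def by auto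
qed

lemma stair_start: "0 < rho Q \<Longrightarrow> stair Q 0 = 0"
  using rho_lt_1[of Q] unfolding stair_def stair_height_def by simp linarith

lemma stair_end: "stair Q (2 * Q) = 1 - rho Q"
proof -
  have "delta * real Q + 1 - rho Q = of_int (\<lfloor>delta * real Q\<rfloor> + 1)"
    unfolding rho_def frac_def by simp
  then have "stair_height Q Q = \<lfloor>delta * real Q\<rfloor> + 1"
    unfolding stair_height_def by (metis floor_of_int)
  then show ?thesis unfolding stair_def rho_def frac_def by simp
qed

definition path_len :: "nat \<Rightarrow> nat" where
  "path_len Q = 4 * Q + 2"

definition path_weight :: "nat \<Rightarrow> nat \<Rightarrow> real" where
  "path_weight Q i =
     (if odd i then 2 * a_const - 1
      else if i = 0 then 2 * a_const
      else 2 * a_const - 1 + stair Q (i div 2) - stair Q (i div 2 - 1))"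

lemma path_weight_values: "path_weight Q i \<in> {a_const, 2 * a_const, 2 * a_const - 1}"
proof (cases "odd i \<or> i = 0")
  case True
  then show ?thesis unfolding path_weight_def by auto
next
  case False
  then have "\<exists>k. i = 4 * k + 2 \<or> i = 4 * k + 4" by presburger
  then obtain k where "i = 4 * k + 2 \<or> i = 4 * k + 4" by blast
  moreover have "path_weight Q (4 * k + 2) = a_const"
    using stair_down_step[of Q k] unfolding path_weight_def delta_def by simp
  moreover have "path_weight Q (4 * k + 4) \<in> {2 * a_const, 2 * a_const - 1}"
  proof -
    have "(4 * k + 4) div 2 = 2 * k + 2" "(4 * k + 4) div 2 - 1 = 2 * k + 1" by simp_all
    then show ?thesis using stair_up_step[of Q k] unfolding path_weight_def by auto
  qed
  ultimately show ?thesis by auto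
qed

lemma potential_cover_eq:
  fixes f y :: "nat \<Rightarrow> real"
  assumes "finite I" "\<forall>i\<in>I. Suc i \<notin> I" "\<forall>i\<in>I. f i = y i + y (Suc i)"
  shows "sum f I = sum y (I \<union> Suc ` I)"
proof -
  have "sum f I = sum y I + sum (y \<circ> Suc) I" using assms(3) by (simp add: sum.distrib)
  also have "sum (y \<circ> Suc) I = sum y (Suc ` I)" by (simp add: sum.reindex)
  also have "sum y I + sum y (Suc ` I) = sum y (I \<union> Suc ` I)"
    using assms(1,2) by (intro sum.union_disjoint[symmetric]) auto
  finally show ?thesis .
qed

lemma potential_cover_le:
  fixes f y :: "nat \<Rightarrow> real"
  assumes "finite I" "\<forall>i\<in>I. Suc i \<notin> I" "\<forall>i\<in>I. f i = y i + y (Suc i)"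
    and "I \<union> Suc ` I \<subseteq> V" "finite V" "\<forall>v\<in>V. 0 \<le> y v"
  shows "sum f I \<le> sum y V"
  using potential_cover_eq[OF assms(1-3)] sum_mono2[OF assms(5,4)] assms(6) by auto

text \<open>Two potentials on the vertices 0, ..., path_len Q of the path: the first is tight on
  every edge i >= 1 and certifies optimality of the odd edges among packings avoiding
  the hub edge 0, the second is tight on every edge i >= 2 and vanishes at the last vertex.\<close>

definition odd_potential :: "nat \<Rightarrow> nat \<Rightarrow> real" where
  "odd_potential Q v =
     (if odd v then stair Q ((v - 1) div 2) + rho Q + delta
      else 2 * a_const - 1 - (stair Q ((v - 2) div 2) + rho Q + delta))"

definition even_potential :: "nat \<Rightarrow> nat \<Rightarrow> real" where
  "even_potential Q v =
     (if even v then stair Q (2 * Q) - stair Q (v div 2 - 1)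
      else 2 * a_const - 1 + stair Q ((v - 1) div 2) - stair Q (2 * Q))"

lemma odd_potential_tight:
  assumes "1 \<le> i"
  shows "path_weight Q i = odd_potential Q i + odd_potential Q (Suc i)"
proof -
  have "(\<exists>c. i = 2 * c + 2) \<or> (\<exists>c. i = 2 * c + 1)" using assms by presburger
  then show ?thesis unfolding path_weight_def odd_potential_def by (auto simp: algebra_simps)
qed

lemma odd_potential_nonneg: "1 \<le> v \<Longrightarrow> 0 \<le> odd_potential Q v"
  using stair_bounds[of Q] delta_bounds unfolding odd_potential_def delta_def
  by (smt (verit))

lemma even_potential_tight: "2 \<le> i \<Longrightarrow> path_weight Q i = even_potential Q i + even_potential Q (Suc i)"
  unfolding path_weight_def even_potential_def
  by (cases "even i") (auto elim!: evenE oddE simp: algebra_simps)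

lemma even_potential_nonneg: "0 \<le> even_potential Q v"
  using stair_bounds[of Q] stair_end[of Q] delta_bounds unfolding even_potential_def delta_def
  by (smt (verit))

lemma even_potential_last: "even_potential Q (path_len Q) = 0"
  unfolding even_potential_def path_len_def by simp

definition odd_idx :: "nat \<Rightarrow> nat set" where
  "odd_idx Q = {i. i < path_len Q \<and> odd i}"

definition even_idx :: "nat \<Rightarrow> nat set" where
  "even_idx Q = {i. i < path_len Q \<and> even i}"

lemma finite_odd_idx: "finite (odd_idx Q)" and finite_even_idx: "finite (even_idx Q)"
  unfolding odd_idx_def even_idx_def by auto

lemma odd_idx_cover: "odd_idx Q \<union> Suc ` odd_idx Q = {1..path_len Q}"
proof (intro set_eqI iffI)
  fix x assume "x \<in> {1..path_len Q}"
  then have "(odd x \<and> x < path_len Q) \<or> (x - 1 \<in> odd_idx Q \<and> x = Suc (x - 1))"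
    unfolding odd_idx_def path_len_def mem_Collect_eq atLeastAtMost_iff by presburger
  then show "x \<in> odd_idx Q \<union> Suc ` odd_idx Q" unfolding odd_idx_def by blast
qed (auto simp: odd_idx_def path_len_def Suc_le_eq odd_pos)

lemma even_idx_cover: "(even_idx Q - {0}) \<union> Suc ` (even_idx Q - {0}) = {2..<path_len Q}"
proof (intro set_eqI iffI)
  fix x assume "x \<in> {2..<path_len Q}"
  then have "(even x \<and> x \<noteq> 0 \<and> x < path_len Q) \<or> (x - 1 \<in> even_idx Q - {0} \<and> x = Suc (x - 1))"
    unfolding even_idx_def path_len_def by auto
  then show "x \<in> (even_idx Q - {0}) \<union> Suc ` (even_idx Q - {0})" unfolding even_idx_def by blast
next
  fix x assume "x \<in> (even_idx Q - {0}) \<union> Suc ` (even_idx Q - {0})"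
  then show "x \<in> {2..<path_len Q}" unfolding even_idx_def path_len_def by (auto; presburger)
qed

lemma packing_bound_without_hub:
  assumes "I \<subseteq> {1..<path_len Q}" "\<forall>i\<in>I. Suc i \<notin> I"
  shows "sum (path_weight Q) I \<le> sum (path_weight Q) (odd_idx Q)"
proof -
  have "sum (path_weight Q) I \<le> sum (odd_potential Q) {1..path_len Q}"
    using assms finite_subset[OF assms(1)]
    by (intro potential_cover_le) (auto intro!: odd_potential_tight odd_potential_nonneg)
  also have "\<dots> = sum (path_weight Q) (odd_idx Q)"
    unfolding odd_idx_cover[symmetric]
    by (rule potential_cover_eq[symmetric])
       (auto simp: odd_idx_def Suc_le_eq odd_pos intro!: odd_potential_tight)
  finally show ?thesis .
qed

lemma packing_bound_with_hub:
  assumes "I \<subseteq> {..<path_len Q}" "0 \<in> I" "\<forall>i\<in>I. Suc i \<notin> I"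
  shows "sum (path_weight Q) I \<le> sum (path_weight Q) (even_idx Q)"
proof -
  have "1 \<notin> I" using assms(2,3) by force
  have I: "I - {0} \<subseteq> {2..<path_len Q}"
  proof
    fix x assume x: "x \<in> I - {0}"
    then have "x \<noteq> 1" "x < path_len Q" using \<open>1 \<notin> I\<close> assms(1) by auto
    then show "x \<in> {2..<path_len Q}" using x by auto
  qed
  have "sum (path_weight Q) (I - {0}) \<le> sum (even_potential Q) {2..path_len Q}"
    using assms I finite_subset[OF assms(1)] by (intro potential_cover_le) (auto intro!: even_potential_tight even_potential_nonneg)
  also have "\<dots> = sum (even_potential Q) {2..<path_len Q}"
    using even_potential_last[of Q] by (simp add: path_len_def atLeastLessThanSuc_atLeastAtMost[symmetric])
  also have "\<dots> = sum (path_weight Q) (even_idx Q - {0})"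
    unfolding even_idx_cover[symmetric]
    by (rule potential_cover_eq[symmetric])
       (auto simp: even_idx_def finite_even_idx intro!: even_potential_tight elim!: evenE)
  finally have "sum (path_weight Q) (I - {0}) \<le> sum (path_weight Q) (even_idx Q - {0})" .
  moreover have "0 \<in> even_idx Q" unfolding even_idx_def path_len_def by simp
  ultimately show ?thesis
    using assms(2) finite_subset[OF assms(1)] finite_even_idx by (simp add: sum.remove)
qed

(* the even packing beats the odd one by exactly 2 - rho Q: the stair telescopes *)
lemma even_minus_odd:
  assumes "0 < rho Q"
  shows "sum (path_weight Q) (even_idx Q) - sum (path_weight Q) (odd_idx Q) = 2 - rho Q"
proof -
  let ?w = "path_weight Q"
  have ev: "even_idx Q = (\<lambda>j. 2 * j) ` {..<2 * Q + 1}"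
    unfolding even_idx_def path_len_def by (auto elim!: evenE)
  have od: "odd_idx Q = (\<lambda>j. 2 * j + 1) ` {..<2 * Q + 1}"
    unfolding odd_idx_def path_len_def by (auto elim!: oddE)
  have "sum ?w (even_idx Q) - sum ?w (odd_idx Q) = (\<Sum>j<2 * Q + 1. ?w (2 * j) - ?w (2 * j + 1))"
    unfolding ev od by (simp add: sum.reindex inj_on_def sum_subtractf)
  also have "\<dots> = (?w 0 - ?w 1) + (\<Sum>j<2 * Q. ?w (2 * Suc j) - ?w (2 * Suc j + 1))"
    unfolding Suc_eq_plus1[symmetric] sum.lessThan_Suc_shift by simp
  also have "(\<Sum>j<2 * Q. ?w (2 * Suc j) - ?w (2 * Suc j + 1)) = (\<Sum>j<2 * Q. stair Q (Suc j) - stair Q j)"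
    by (intro sum.cong) (auto simp: path_weight_def)
  also have "\<dots> = stair Q (2 * Q) - stair Q 0" by (rule sum_lessThan_telescope)
  also have "?w 0 - ?w 1 = 1" unfolding path_weight_def by simp
  finally show ?thesis using stair_end[of Q] stair_start[OF assms] by simp
qed

text \<open>The graph: a hub vertex 0 and, for every Q with rho Q > 0, a path of path_len Q edges
  starting at the hub; the i-th vertex of path Q (i > 0) is a private code of (Q, i).\<close>

definition vert :: "nat \<Rightarrow> nat \<Rightarrow> nat" where
  "vert Q i = (if i = 0 then 0 else Suc (prod_encode (Q, i)))"

definition edge :: "nat \<Rightarrow> nat \<Rightarrow> nat set" where
  "edge Q i = {vert Q i, vert Q (Suc i)}"

definition paths :: "nat set" where
  "paths = {Q. 0 < rho Q}"

definition path_edges :: "nat \<Rightarrow> nat set set" where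
  "path_edges Q = edge Q ` {..<path_len Q}"

definition G_edges :: "nat set set" where
  "G_edges = (\<Union>Q\<in>paths. path_edges Q)"

definition G_weight :: "nat set \<Rightarrow> real" where
  "G_weight e = (THE x. \<exists>Q i. e = edge Q i \<and> x = path_weight Q i)"

lemma vert_hub [simp]: "vert Q 0 = 0"
  unfolding vert_def by simp

lemma vert_eq_iff: "vert Q i = vert Q' i' \<longleftrightarrow> (i = 0 \<and> i' = 0) \<or> (Q = Q' \<and> i = i')"
  unfolding vert_def using inj_prod_encode[unfolded inj_def] by auto

lemma edge_inj:
  assumes "edge Q i = edge Q' i'"
  shows "Q = Q' \<and> i = i'"
proof -
  have "vert Q (Suc i) = vert Q' i' \<or> vert Q (Suc i) = vert Q' (Suc i')"
    using assms unfolding edge_def by (metis insert_iff doubleton_eq_iff)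
  then show ?thesis
    using assms unfolding edge_def doubleton_eq_iff vert_eq_iff by auto
qed

lemma G_weight_edge: "G_weight (edge Q i) = path_weight Q i"
  unfolding G_weight_def by (rule the_equality) (auto dest: edge_inj)

lemma hub_in_edge: "0 \<in> edge Q i \<longleftrightarrow> i = 0"
  unfolding edge_def vert_def by auto

lemma edges_of_different_paths: "Q \<noteq> Q' \<Longrightarrow> edge Q i \<inter> edge Q' j \<subseteq> {0}"
  unfolding edge_def by (auto simp: vert_eq_iff)

lemma edges_avoiding_hub_of_different_paths:
  assumes "Q \<noteq> Q'" "0 \<notin> I" "e \<in> edge Q ` I" "f \<in> edge Q' ` J"
  shows "e \<inter> f = {}"
proof -
  obtain i j where "i \<in> I" "e = edge Q i" "f = edge Q' j" using assms(3,4) by blast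
  moreover have "0 \<notin> edge Q i" using assms(2) \<open>i \<in> I\<close> hub_in_edge by metis
  ultimately show ?thesis using edges_of_different_paths[OF assms(1), of i j] by blast
qed

lemma edges_of_same_path: "i \<noteq> j \<Longrightarrow> Suc i \<noteq> j \<Longrightarrow> Suc j \<noteq> i \<Longrightarrow> edge Q i \<inter> edge Q j = {}"
  unfolding edge_def by (auto simp: vert_eq_iff)

lemma hub_edges: "e \<in> G_edges \<Longrightarrow> 0 \<in> e \<Longrightarrow> \<exists>Q\<in>paths. e = edge Q 0"
  unfolding G_edges_def path_edges_def by (auto simp: hub_in_edge)

lemma G_simple: "simple_graph G_edges"
  proof -
  have "vert Q i \<noteq> vert Q (Suc i)" for Q i by (simp add: vert_eq_iff)
  then show ?thesis unfolding simple_graph_def G_edges_def path_edges_def edge_def by blast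
qed

lemma G_weight_values: "\<forall>e\<in>G_edges. G_weight e \<in> {a_const, 2 * a_const, 2 * a_const - 1}"
  unfolding G_edges_def path_edges_def using G_weight_edge path_weight_values by auto

lemma finite_path_edges: "finite (path_edges Q)"
  unfolding path_edges_def by simp

lemma sum_G_weight_edges: "sum G_weight (edge Q ` I) = sum (path_weight Q) I"
  using edge_inj by (subst sum.reindex) (auto simp: inj_on_def G_weight_edge)

lemma sum_G_weight_two_paths:
  assumes "Q \<noteq> Q'"
  shows "sum G_weight (M \<inter> (path_edges Q \<union> path_edges Q'))
       = sum G_weight (M \<inter> path_edges Q) + sum G_weight (M \<inter> path_edges Q')"
proof -
  have "path_edges Q \<inter> path_edges Q' = {}"
    using assms unfolding path_edges_def by (auto dest: edge_inj)
  then show ?thesis unfolding Int_Un_distrib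
    by (intro sum.union_disjoint) (use finite_path_edges in auto)
qed

lemma odd_idx_spread: "\<forall>i\<in>odd_idx Q. Suc i \<notin> odd_idx Q"
  and even_idx_spread: "\<forall>i\<in>even_idx Q. Suc i \<notin> even_idx Q"
  unfolding odd_idx_def even_idx_def by auto

lemma edges_disjoint_if_spread:
  assumes "\<forall>i\<in>I. Suc i \<notin> I"
  shows "\<forall>e\<in>edge Q ` I. \<forall>f\<in>edge Q ` I. e \<noteq> f \<longrightarrow> e \<inter> f = {}"
proof (intro ballI impI)
  fix e f assume "e \<in> edge Q ` I" "f \<in> edge Q ` I" "e \<noteq> f"
  then obtain i j where ij: "i \<in> I" "j \<in> I" "e = edge Q i" "f = edge Q j" "i \<noteq> j" by blast
  then have "Suc i \<noteq> j" "Suc j \<noteq> i" using assms by auto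
  then show "e \<inter> f = {}" using ij edges_of_same_path by simp
qed

lemma matching_on_path_bound:
  assumes "matching E M"
  shows "sum G_weight (M \<inter> path_edges Q) \<le>
    (if edge Q 0 \<in> M then sum (path_weight Q) (even_idx Q) else sum (path_weight Q) (odd_idx Q))"
proof -
  define I where "I = {i. i < path_len Q \<and> edge Q i \<in> M}"
  have sum_eq: "sum G_weight (M \<inter> path_edges Q) = sum (path_weight Q) I"
  proof -
    have "M \<inter> path_edges Q = edge Q ` I" unfolding I_def path_edges_def by auto
    then show ?thesis by (simp add: sum_G_weight_edges)
  qed
  have spread: "\<forall>i\<in>I. Suc i \<notin> I"
  proof (intro ballI notI)
    fix i assume "i \<in> I" "Suc i \<in> I"
    then have "edge Q i \<in> M" "edge Q (Suc i) \<in> M" "edge Q i \<noteq> edge Q (Suc i)"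
      unfolding I_def by (auto dest: edge_inj)
    then have "edge Q i \<inter> edge Q (Suc i) = {}" using assms unfolding matching_def by blast
    then show False unfolding edge_def by auto
  qed
  show ?thesis
  proof (cases "edge Q 0 \<in> M")
    case True
    then have "0 \<in> I" unfolding I_def path_len_def by simp
    then show ?thesis using True packing_bound_with_hub[OF _ _ spread] sum_eq
      by (auto simp: I_def)
  next
    case False
    then have "I \<subseteq> {1..<path_len Q}" unfolding I_def by (auto simp: Suc_le_eq) (metis neq0_conv)
    then show ?thesis using False packing_bound_without_hub[OF _ spread] sum_eq by simp
  qed
qed

lemma not_strongly_maximal_if_improvable:
  fixes w :: "'v set \<Rightarrow> real"
  assumes "finite X" "K \<subseteq> X" "matching E ((M - X) \<union> K)" "sum w (M \<inter> X) < sum w K"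
  shows "\<not> strongly_w_maximal E w M"
proof
  assume sm: "strongly_w_maximal E w M"
  define N where "N = (M - X) \<union> K"
  have NM: "N - M = K - (M \<inter> X)" and MN: "M - N = (M \<inter> X) - K"
    unfolding N_def using assms(2) by auto
  have fin: "finite K" "finite (M \<inter> X)" using assms(1,2) finite_subset by auto
  have "matching E N" "finite (M - N)" "finite (N - M)"
    using assms(3) fin unfolding N_def[symmetric] NM MN by auto
  then have "sum w (N - M) \<le> sum w (M - N)"
    using sm unfolding strongly_w_maximal_def by blast
  moreover have "sum w K = sum w (K - (M \<inter> X)) + sum w (K \<inter> (M \<inter> X))"
    "sum w (M \<inter> X) = sum w ((M \<inter> X) - K) + sum w (K \<inter> (M \<inter> X))"
    using sum.Int_Diff[OF fin(1), of w "M \<inter> X"] sum.Int_Diff[OF fin(2), of w K]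
    by (simp_all add: Int_commute)
  ultimately show False using assms(4) unfolding NM MN by linarith
qed

lemma matching_edge_at_vertex_unique:
  assumes "matching E M" "e \<in> M" "f \<in> M" "x \<in> e" "x \<in> f"
  shows "e = f"
proof (rule ccontr)
  assume "e \<noteq> f"
  then have "e \<inter> f = {}" using assms(1-3) unfolding matching_def by blast
  then show False using assms(4,5) by blast
qed

lemma pairwise_disjoint_Un:
  assumes "\<forall>e\<in>A. \<forall>f\<in>A. e \<noteq> f \<longrightarrow> e \<inter> f = {}" "\<forall>e\<in>B. \<forall>f\<in>B. e \<noteq> f \<longrightarrow> e \<inter> f = {}"
    and "\<forall>e\<in>A. \<forall>f\<in>B. e \<inter> f = {}"
  shows "\<forall>e\<in>A \<union> B. \<forall>f\<in>A \<union> B. e \<noteq> f \<longrightarrow> e \<inter> f = {}"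
proof (intro ballI impI)
  fix e f assume "e \<in> A \<union> B" "f \<in> A \<union> B" "e \<noteq> f"
  then consider "e \<in> A" "f \<in> A" | "e \<in> B" "f \<in> B" | "e \<in> A" "f \<in> B" | "e \<in> B" "f \<in> A"
    by blast
  then show "e \<inter> f = {}"
  proof cases
    case 4
    then have "f \<inter> e = {}" using assms(3) by blast
    then show ?thesis by (simp add: Int_commute)
  qed (use assms \<open>e \<noteq> f\<close> in blast)+
qed

(* the odd packing of one path and the even packing of another path form a packing,
   since odd edges avoid the hub *)
lemma odd_even_packing_disjoint:
  assumes "Q \<noteq> Q'"
  shows "\<forall>e\<in>edge Q ` odd_idx Q \<union> edge Q' ` even_idx Q'.
           \<forall>f\<in>edge Q ` odd_idx Q \<union> edge Q' ` even_idx Q'. e \<noteq> f \<longrightarrow> e \<inter> f = {}"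
proof -
  have "0 \<notin> odd_idx Q" unfolding odd_idx_def by simp
  then have "\<forall>e\<in>edge Q ` odd_idx Q. \<forall>f\<in>edge Q' ` even_idx Q'. e \<inter> f = {}"
    by (intro ballI edges_avoiding_hub_of_different_paths[OF assms])
  then show ?thesis
    by (intro pairwise_disjoint_Un edges_disjoint_if_spread odd_idx_spread even_idx_spread)
qed

lemma matching_replace:
  assumes "matching E M" "K \<subseteq> E" "\<forall>e\<in>K. \<forall>f\<in>K. e \<noteq> f \<longrightarrow> e \<inter> f = {}"
    and "\<forall>e\<in>M - X. \<forall>f\<in>K. e \<inter> f = {}"
  shows "matching E ((M - X) \<union> K)"
proof -
  have "M \<subseteq> E" and M_disjoint: "\<forall>e\<in>M. \<forall>f\<in>M. e \<noteq> f \<longrightarrow> e \<inter> f = {}"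
    using assms(1) unfolding matching_def by auto
  then have "\<forall>e\<in>M - X. \<forall>f\<in>M - X. e \<noteq> f \<longrightarrow> e \<inter> f = {}" by (meson DiffD1)
  then have "\<forall>e\<in>M - X \<union> K. \<forall>f\<in>M - X \<union> K. e \<noteq> f \<longrightarrow> e \<inter> f = {}"
    by (rule pairwise_disjoint_Un[OF _ assms(3,4)])
  moreover have "M - X \<union> K \<subseteq> E" using \<open>M \<subseteq> E\<close> assms(2) by blast
  ultimately show ?thesis unfolding matching_def by (intro conjI)
qed

text \<open>Exchanging the matching on a finite set P of paths: the other edges of M are on other
  paths and avoid the hub, so they do not interfere with any packing on the paths in P.\<close>

lemma path_exchange_improves:
  assumes M: "matching G_edges M" and P: "P \<subseteq> paths" "finite P"
    and X: "X = (\<Union>Q\<in>P. path_edges Q)"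
    and hub: "\<forall>e\<in>M. 0 \<in> e \<longrightarrow> e \<in> X"
    and K: "K \<subseteq> X" "\<forall>e\<in>K. \<forall>f\<in>K. e \<noteq> f \<longrightarrow> e \<inter> f = {}"
    and gain: "sum G_weight (M \<inter> X) < sum G_weight K"
  shows "\<not> strongly_w_maximal G_edges G_weight M"
proof (rule not_strongly_maximal_if_improvable[OF _ K(1) _ gain])
  show "finite X" using P(2) by (simp add: X finite_path_edges)
  have "e \<inter> f = {}" if e: "e \<in> M - X" and f: "f \<in> K" for e f
  proof -
    have "e \<in> G_edges" using e M unfolding matching_def by blast
    then obtain Q i where Q: "Q \<in> paths" "i < path_len Q" "e = edge Q i"
      unfolding G_edges_def path_edges_def by blast
    obtain Q' j where Q': "Q' \<in> P" "f = edge Q' j"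
      using f K(1) unfolding X path_edges_def by blast
    have "e \<in> path_edges Q" using Q unfolding path_edges_def by blast
    then have "Q \<notin> P" using e unfolding X by blast
    then have "edge Q i \<inter> edge Q' j \<subseteq> {0}" using Q'(1) by (intro edges_of_different_paths) blast
    moreover have "0 \<notin> e" using hub e by blast
    ultimately show ?thesis using Q(3) Q'(2) by blast
  qed
  moreover have "K \<subseteq> G_edges" using K(1) P(1) by (auto simp: X G_edges_def)
  ultimately show "matching G_edges ((M - X) \<union> K)"
    by (intro matching_replace[OF M _ K(2)]) auto
qed

(* a matching missing every hub edge is beaten by the even packing of any path *)
lemma improvable_if_hub_unmatched:
  assumes M: "matching G_edges M" and no_hub: "\<forall>Q\<in>paths. edge Q 0 \<notin> M"
  shows "\<not> strongly_w_maximal G_edges G_weight M"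
proof -
  obtain Q where "0 < rho Q" using rho_arbitrarily_small[of 1] by auto
  then have Q: "Q \<in> paths" unfolding paths_def by simp
  have "sum G_weight (M \<inter> path_edges Q) \<le> sum (path_weight Q) (odd_idx Q)"
    using matching_on_path_bound[OF M, of Q] no_hub Q by simp
  also have "\<dots> < sum (path_weight Q) (even_idx Q)"
    using even_minus_odd[of Q] rho_lt_1[of Q] Q unfolding paths_def by simp
  also have "\<dots> = sum G_weight (edge Q ` even_idx Q)" by (simp add: sum_G_weight_edges)
  finally have gain: "sum G_weight (M \<inter> path_edges Q) < sum G_weight (edge Q ` even_idx Q)" .
  have hub: "\<forall>e\<in>M. 0 \<in> e \<longrightarrow> e \<in> path_edges Q"
  proof (intro ballI impI)
    fix e assume "e \<in> M" "0 \<in> e"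
    moreover have "M \<subseteq> G_edges" using M unfolding matching_def by simp
    ultimately obtain Q' where "Q' \<in> paths" "e = edge Q' 0" using hub_edges by blast
    with no_hub \<open>e \<in> M\<close> show "e \<in> path_edges Q" by simp
  qed
  have K: "edge Q ` even_idx Q \<subseteq> path_edges Q"
    unfolding path_edges_def even_idx_def by auto
  have K_disjoint: "\<forall>e\<in>edge Q ` even_idx Q. \<forall>f\<in>edge Q ` even_idx Q. e \<noteq> f \<longrightarrow> e \<inter> f = {}"
    by (rule edges_disjoint_if_spread[OF even_idx_spread])
  show ?thesis
    by (rule path_exchange_improves[of M "{Q}", OF M _ _ _ hub K K_disjoint gain]) (use Q in auto)
qed

(* a matching using the hub edge of path Q is beaten by moving the hub edge to a path Q'
   with smaller rho: the exchange gains rho Q - rho Q' *)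
lemma improvable_if_hub_matched:
  assumes M: "matching G_edges M" and Q: "Q \<in> paths" "edge Q 0 \<in> M"
  shows "\<not> strongly_w_maximal G_edges G_weight M"
proof -
  obtain Q' where "0 < rho Q'" "rho Q' < rho Q"
    using rho_arbitrarily_small[of "rho Q"] Q(1) unfolding paths_def by auto
  then have Q': "Q' \<in> paths" "Q \<noteq> Q'" "rho Q' < rho Q" unfolding paths_def by auto
  have hub_unique: "e = edge Q 0" if "e \<in> M" "0 \<in> e" for e
    using matching_edge_at_vertex_unique[OF M that(1) Q(2) that(2)] by (simp add: hub_in_edge)
  have "edge Q' 0 \<notin> M"
  proof
    assume "edge Q' 0 \<in> M"
    then have "edge Q' 0 = edge Q 0" by (rule hub_unique) (simp add: hub_in_edge)
    then show False using Q'(2) edge_inj by blast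
  qed
  define K where "K = edge Q ` odd_idx Q \<union> edge Q' ` even_idx Q'"
  have "sum G_weight (M \<inter> (path_edges Q \<union> path_edges Q'))
      = sum G_weight (M \<inter> path_edges Q) + sum G_weight (M \<inter> path_edges Q')"
    by (rule sum_G_weight_two_paths[OF Q'(2)])
  also have "\<dots> \<le> sum (path_weight Q) (even_idx Q) + sum (path_weight Q') (odd_idx Q')"
    using matching_on_path_bound[OF M, of Q] matching_on_path_bound[OF M, of Q'] Q(2)
      \<open>edge Q' 0 \<notin> M\<close> by simp
  also have "\<dots> < sum (path_weight Q) (odd_idx Q) + sum (path_weight Q') (even_idx Q')"
    using even_minus_odd[of Q] even_minus_odd[of Q'] Q(1) Q'(1,3) unfolding paths_def by simp
  also have "\<dots> = sum G_weight K"
  proof -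
    have "edge Q ` odd_idx Q \<inter> edge Q' ` even_idx Q' = {}"
      using Q'(2) by (auto dest: edge_inj)
    then show ?thesis unfolding K_def
      by (simp add: sum.union_disjoint finite_odd_idx finite_even_idx sum_G_weight_edges)
  qed
  finally have gain: "sum G_weight (M \<inter> (path_edges Q \<union> path_edges Q')) < sum G_weight K" .
  have K_disjoint: "\<forall>e\<in>K. \<forall>f\<in>K. e \<noteq> f \<longrightarrow> e \<inter> f = {}"
    unfolding K_def by (rule odd_even_packing_disjoint[OF Q'(2)])
  have hub: "\<forall>e\<in>M. 0 \<in> e \<longrightarrow> e \<in> path_edges Q \<union> path_edges Q'"
  proof (intro ballI impI)
    fix e assume "e \<in> M" "0 \<in> e"
    then have "e = edge Q 0" by (rule hub_unique)
    then show "e \<in> path_edges Q \<union> path_edges Q'" unfolding path_edges_def path_len_def by auto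
  qed
  have K: "K \<subseteq> path_edges Q \<union> path_edges Q'"
    unfolding K_def path_edges_def odd_idx_def even_idx_def by auto
  show ?thesis
    by (rule path_exchange_improves[of M "{Q, Q'}", OF M _ _ _ hub K K_disjoint gain]) (use Q(1) Q'(1) in auto)
qed

lemma no_strongly_maximal_matching: "\<not> strongly_w_maximal G_edges G_weight M"
proof
  assume sm: "strongly_w_maximal G_edges G_weight M"
  then have M: "matching G_edges M" unfolding strongly_w_maximal_def by simp
  show False
  proof (cases "\<exists>Q\<in>paths. edge Q 0 \<in> M")
    case True
    then show False using improvable_if_hub_matched[OF M] sm by blast
  next
    case False
    then show False using improvable_if_hub_unmatched[OF M] sm by blast
  qed
qed

theorem mainTheorem9:
  shows "\<exists>(E :: nat set set) (w :: nat set \<Rightarrow> real).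
           simple_graph E \<and>
           (\<forall>e\<in>E. w e \<in> {a_const, 2 * a_const, 2 * a_const - 1}) \<and>
           \<not> (\<exists>M. strongly_w_maximal E w M)"
  using G_simple G_weight_values no_strongly_maximal_matching by blast

end
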